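(* Let $K\subset\mathbb{R}^{n+m}$ be a convex body. For every $u\in W$ and every $y\in(\Sigma_\pi K)^u$ there is a measurable section $\gamma$ with $\int_{\pi(K)}\gamma(x)\,\mathrm{d}x=y$ and $\gamma(x)\in (K_x)^u$ for every $x\in\pi(K)$. Consequently $$(\Sigma_\pi K)^u=\Big\{\int_{\pi(K)}\gamma(x)\,\mathrm{d}x : \gamma \text{ measurable section with } \gamma(x)\in (K_x)^u \text{ for all } x\in\pi(K)\Big\}.$$
   Context: A convex body is a non-empty compact convex subset of a real vector space; its support function is $h_L(u)=\max\{\langle u,x\rangle : x\in L\}$, and its face in direction $u$ is $L^u:=\{y\in L:\langle u,y\rangle=h_L(u)\}$. Let $V\subset\mathbb{R}^{n+m}$ be a linear subspace of dimension $n$, $W=V^\perp$, $\pi:\mathbb{R}^{n+m}\to V$ the orthogonal projection. For $x\in\pi(K)$ let $K_x:=\{y\in W : x+y\in K\}$. A section is a map $\gamma:\pi(K)\to W$ with $\gamma(x)\in K_x$ for all $x$; measurable means Borel measurable. The fiber body is $\Sigma_\pi K:=\{\int_{\pi(K)}\gamma(x)\,\mathrm{d}x : \gamma \text{ measurable section}\}\subset W$, with $\mathrm{d}x$ Lebesgue measure on $V$. *)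

theory Defs
  imports "HOL-Analysis.Analysis"
begin

definition support_fun :: "'a::real_inner set \<Rightarrow> 'a \<Rightarrow> real" where
  "support_fun L u = (SUP x\<in>L. inner u x)"

definition face :: "'a::real_inner set \<Rightarrow> 'a \<Rightarrow> 'a set" where
  "face L u = {y \<in> L. inner u y = support_fun L u}"

definition proj :: "'a::euclidean_space set \<Rightarrow> 'a \<Rightarrow> 'a" where
  "proj V z = (THE v. v \<in> V \<and> z - v \<in> orthogonal_comp V)"

definition fiber :: "'a::euclidean_space set \<Rightarrow> 'a set \<Rightarrow> 'a \<Rightarrow> 'a set" where
  "fiber K V x = {y \<in> orthogonal_comp V. x + y \<in> K}"

text \<open>Lebesgue measure on the subspace V = range L, transported from the
  Lebesgue measure of 'v via a linear isometry L onto V.\<close>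
definition lebesgue_sub :: "('v::euclidean_space \<Rightarrow> 'a::euclidean_space) \<Rightarrow> 'a measure" where
  "lebesgue_sub L = distr lborel borel L"

definition meas_section :: "'a::euclidean_space set \<Rightarrow> 'a set \<Rightarrow> ('a \<Rightarrow> 'a) \<Rightarrow> bool" where
  "meas_section K V \<gamma> \<longleftrightarrow>
     (\<forall>x \<in> proj V ` K. \<gamma> x \<in> fiber K V x) \<and>
     \<gamma> \<in> borel_measurable (restrict_space borel (proj V ` K))"

definition sec_integral ::
  "('v::euclidean_space \<Rightarrow> 'a::euclidean_space) \<Rightarrow> 'a set \<Rightarrow> ('a \<Rightarrow> 'a) \<Rightarrow> 'a" where
  "sec_integral L K \<gamma> = set_lebesgue_integral (lebesgue_sub L) (proj (range L) ` K) \<gamma>"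

definition fiber_body :: "('v::euclidean_space \<Rightarrow> 'a::euclidean_space) \<Rightarrow> 'a set \<Rightarrow> 'a set" where
  "fiber_body L K = {sec_integral L K \<gamma> | \<gamma>. meas_section K (range L) \<gamma>}"

end

theory Submission
  imports Defs
begin

text \<open>Since \<open>u \<bullet> \<integral>\<gamma> = \<integral> u \<bullet> \<gamma>(x) dx\<close>, a section whose values maximize \<open>u\<close> on
  every fiber has an integral maximizing \<open>u\<close> on the fiber body, provided such a section can be
  chosen Borel measurably. It can: on the fiber over \<open>x\<close> the maximizers of \<open>u\<close> form a compact
  convex set, and its point of least norm depends measurably on \<open>x\<close>. Conversely, if \<open>\<integral>\<gamma>\<close>
  lies in the face of the fiber body then \<open>\<gamma>(x)\<close> maximizes \<open>u\<close> for almost every \<open>x\<close>, and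
  replacing \<open>\<gamma>\<close> by the measurable maximizing section on the exceptional null set keeps the
  integral and makes \<open>\<gamma>(x)\<close> lie in the face of every fiber.\<close>

definition maximizers :: "('b \<Rightarrow> real) \<Rightarrow> 'b set \<Rightarrow> 'b set" where
  "maximizers \<phi> S = {y \<in> S. \<forall>z\<in>S. \<phi> z \<le> \<phi> y}"

lemma maximizers_nonempty:
  fixes S :: "'b::topological_space set"
  assumes "compact S" "S \<noteq> {}" "continuous_on S \<phi>"
  shows "maximizers \<phi> S \<noteq> {}"
  using continuous_attains_sup[OF assms] unfolding maximizers_def by blast

lemma maximizers_eq_superlevel:
  assumes "y0 \<in> maximizers \<phi> S"
  shows "maximizers \<phi> S = S \<inter> {y. \<phi> y0 \<le> \<phi> y}"
  using assms unfolding maximizers_def by (auto intro: order_trans)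

lemma compact_maximizers:
  fixes S :: "'b::t2_space set"
  assumes "compact S" "continuous_on UNIV \<phi>"
  shows "compact (maximizers \<phi> S)"
proof (cases "maximizers \<phi> S = {}")
  case False
  then obtain y0 where "y0 \<in> maximizers \<phi> S" by blast
  moreover have "closed {y. \<phi> y0 \<le> \<phi> y}"
    using assms(2) by (intro closed_Collect_le continuous_on_const) auto
  ultimately show ?thesis
    using assms(1) by (simp add: maximizers_eq_superlevel[OF \<open>y0 \<in> _\<close>] compact_Int_closed)
qed simp

lemma convex_maximizers_inner:
  assumes "convex S"
  shows "convex (maximizers (inner u) S)"
proof (cases "maximizers (inner u) S = {}")
  case False
  then obtain y0 where "y0 \<in> maximizers (inner u) S" by blast
  then show ?thesis
    using assms by (simp add: maximizers_eq_superlevel[OF \<open>y0 \<in> _\<close>] convex_Int convex_halfspace_ge)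
qed simp

lemma face_eq_maximizers:
  assumes "maximizers (inner u) S \<noteq> {}"
  shows "face S u = maximizers (inner u) S"
proof -
  obtain y0 where y0: "y0 \<in> maximizers (inner u) S" using assms by blast
  then have "support_fun S u = u \<bullet> y0"
    unfolding support_fun_def maximizers_def by (intro cSup_eq_maximum) auto
  with y0 show ?thesis
    unfolding face_def maximizers_def by (auto intro: order_antisym)
qed

text \<open>The maximizers of \<open>\<phi>\<close> on \<open>T x\<close> meet \<open>C\<close> iff \<open>T x \<inter> C\<close> reaches every rational level of
  \<open>\<phi>\<close> that \<open>T x\<close> reaches; this turns the condition into a countable Boolean combination of
  sets of the form \<open>{x \<in> D. T x \<inter> C' \<noteq> {}}\<close>.\<close>
lemma borel_hits_maximizers:
  fixes T :: "'a::topological_space \<Rightarrow> 'b::t2_space set"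
  assumes D: "D \<in> sets borel"
    and T: "\<And>x. x \<in> D \<Longrightarrow> compact (T x)" "\<And>x. x \<in> D \<Longrightarrow> T x \<noteq> {}"
    and \<phi>: "continuous_on UNIV \<phi>"
    and hits: "\<And>C. closed C \<Longrightarrow> {x\<in>D. T x \<inter> C \<noteq> {}} \<in> sets borel"
    and C: "closed C"
  shows "{x\<in>D. maximizers \<phi> (T x) \<inter> C \<noteq> {}} \<in> sets borel"
proof -
  define up where "up q = {y. q \<le> \<phi> y}" for q
  define hit where "hit S = {x\<in>D. T x \<inter> S \<noteq> {}}" for S
  have closed_up: "closed (up q)" for q
    unfolding up_def using \<phi> by (intro closed_Collect_le continuous_on_const) auto
  have max_hits_iff: "maximizers \<phi> (T x) \<inter> C \<noteq> {} \<longleftrightarrow> (\<forall>q\<in>\<rat>. T x \<inter> up q \<noteq> {} \<longrightarrow> T x \<inter> (C \<inter> up q) \<noteq> {})"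
    if xD: "x \<in> D" for x
  proof
    assume "maximizers \<phi> (T x) \<inter> C \<noteq> {}"
    then obtain y where "y \<in> T x \<inter> C" "\<And>z. z \<in> T x \<Longrightarrow> \<phi> z \<le> \<phi> y"
      unfolding maximizers_def by blast
    then show "\<forall>q\<in>\<rat>. T x \<inter> up q \<noteq> {} \<longrightarrow> T x \<inter> (C \<inter> up q) \<noteq> {}"
      unfolding up_def by (blast intro: order_trans)
  next
    assume level: "\<forall>q\<in>\<rat>. T x \<inter> up q \<noteq> {} \<longrightarrow> T x \<inter> (C \<inter> up q) \<noteq> {}"
    obtain z0 where z0: "z0 \<in> T x" using T(2)[OF xD] by blast
    have "z0 \<in> up (of_int \<lfloor>\<phi> z0\<rfloor>)" by (simp add: up_def)
    then have "T x \<inter> (C \<inter> up (of_int \<lfloor>\<phi> z0\<rfloor>)) \<noteq> {}"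
      using level z0 Rats_of_int by blast
    then have "T x \<inter> C \<noteq> {}" by blast
    moreover have "compact (T x \<inter> C)" using T(1)[OF xD] C by (rule compact_Int_closed)
    ultimately obtain y0 where y0: "y0 \<in> T x \<inter> C" "\<And>y. y \<in> T x \<inter> C \<Longrightarrow> \<phi> y \<le> \<phi> y0"
      using continuous_attains_sup[of "T x \<inter> C" \<phi>] continuous_on_subset[OF \<phi> subset_UNIV] by blast
    have "\<phi> z \<le> \<phi> y0" if "z \<in> T x" for z
    proof (rule ccontr)
      assume "\<not> \<phi> z \<le> \<phi> y0"
      then obtain q where q: "q \<in> \<rat>" "\<phi> y0 < q" "q < \<phi> z"
        using Rats_dense_in_real[of "\<phi> y0" "\<phi> z"] by auto
      with that have "T x \<inter> up q \<noteq> {}" by (auto simp: up_def)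
      with level q(1) obtain y where "y \<in> T x \<inter> C" "q \<le> \<phi> y" by (auto simp: up_def)
      with y0(2)[of y] q(2) show False by linarith
    qed
    with y0(1) show "maximizers \<phi> (T x) \<inter> C \<noteq> {}" unfolding maximizers_def by blast
  qed
  have "{x\<in>D. maximizers \<phi> (T x) \<inter> C \<noteq> {}} = D \<inter> (\<Inter>q\<in>\<rat>. (D - hit (up q)) \<union> hit (C \<inter> up q))"
    by (rule set_eqI, case_tac "x \<in> D") (simp_all add: hit_def max_hits_iff imp_conv_disj)
  moreover have "hit (up q) \<in> sets borel" "hit (C \<inter> up q) \<in> sets borel" for q
    unfolding hit_def using hits closed_up C by (simp_all add: closed_Int)
  ultimately show ?thesis
    using D by (simp add: sets.Int sets.Un sets.Diff sets.countable_INT'' countable_rat)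
qed

lemma borel_measurableI_closed_vimage:
  fixes f :: "'a::topological_space \<Rightarrow> 'b::topological_space"
  assumes "\<And>C. closed C \<Longrightarrow> f -` C \<in> sets borel"
  shows "f \<in> borel_measurable borel"
proof (rule borel_measurableI)
  fix S :: "'b set" assume "open S"
  then have "f -` (- S) \<in> sets borel" by (intro assms) auto
  then show "f -` S \<inter> space borel \<in> sets borel"
    by (metis Compl_eq_Diff_UNIV sets.compl_sets space_borel vimage_Compl double_compl inf_top.right_neutral)
qed

lemma maximizers_neg_norm:
  fixes S :: "'a::euclidean_space set"
  assumes "convex S" "closed S" "S \<noteq> {}"
  shows "maximizers (\<lambda>y. - norm y) S = {closest_point S 0}"
proof -
  have "y = closest_point S 0" if "y \<in> maximizers (\<lambda>y. - norm y) S" for y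
    using that closest_point_unique[OF assms(1,2), of y 0] by (simp add: maximizers_def)
  moreover have "closest_point S 0 \<in> maximizers (\<lambda>y. - norm y) S"
    using closest_point_exists[OF assms(2,3), of 0] by (simp add: maximizers_def)
  ultimately show ?thesis by blast
qed

text \<open>The least-norm maximizer is Borel by two applications of \<open>borel_hits_maximizers\<close>: first for
  \<open>u \<bullet> y\<close> on the slices, then for \<open>- norm y\<close> on the resulting sets of maximizers.\<close>
lemma measurable_argmax_selection:
  fixes G :: "('a::euclidean_space \<times> 'b::euclidean_space) set"
  assumes G: "compact G" and cvx: "\<And>x. convex {y. (x, y) \<in> G}"
  obtains \<sigma> where "\<sigma> \<in> borel_measurable borel"
    "\<And>x. x \<in> fst ` G \<Longrightarrow> \<sigma> x \<in> maximizers (inner u) {y. (x, y) \<in> G}"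
proof -
  define D where "D = fst ` G"
  define T where "T x = {y. (x, y) \<in> G}" for x
  define A where "A x = maximizers (inner u) (T x)" for x
  define \<sigma> where "\<sigma> x = (if x \<in> D then closest_point (A x) 0 else 0)" for x
  have D: "D \<in> sets borel"
    unfolding D_def by (intro borel_closed compact_imp_closed compact_continuous_image G continuous_intros)
  have T_compact: "compact (T x)" for x
  proof -
    have "compact (snd ` (G \<inter> ({x} \<times> UNIV)))"
      using G by (intro compact_continuous_image compact_Int_closed closed_Times continuous_intros) auto
    moreover have "T x = snd ` (G \<inter> ({x} \<times> UNIV))" unfolding T_def by force
    ultimately show ?thesis by simp
  qed
  have T_nonempty: "T x \<noteq> {}" if "x \<in> D" for x
    using that unfolding D_def T_def by force
  have hits_T: "{x\<in>D. T x \<inter> C \<noteq> {}} \<in> sets borel" if "closed C" for C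
  proof -
    have "{x\<in>D. T x \<inter> C \<noteq> {}} = fst ` (G \<inter> (UNIV \<times> C))"
      unfolding D_def T_def by force
    moreover have "compact (fst ` (G \<inter> (UNIV \<times> C)))"
      using G that by (intro compact_continuous_image compact_Int_closed closed_Times continuous_intros) auto
    ultimately show ?thesis by (simp add: compact_imp_closed)
  qed
  have inner_cont: "continuous_on UNIV (inner u)"
    by (intro continuous_intros)
  have A_compact: "compact (A x)" for x
    unfolding A_def using T_compact inner_cont by (rule compact_maximizers)
  have A_nonempty: "A x \<noteq> {}" if "x \<in> D" for x
    unfolding A_def using T_compact T_nonempty[OF that] continuous_on_subset[OF inner_cont]
    by (intro maximizers_nonempty) auto
  have A_convex: "convex (A x)" for x
    unfolding A_def T_def using cvx by (rule convex_maximizers_inner)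
  have hits_A: "{x\<in>D. A x \<inter> C \<noteq> {}} \<in> sets borel" if "closed C" for C
    unfolding A_def using D T_compact T_nonempty inner_cont hits_T that by (rule borel_hits_maximizers)
  have "\<sigma> -` C \<in> sets borel" if "closed C" for C
  proof -
    have "\<sigma> -` C = {x\<in>D. maximizers (\<lambda>y. - norm y) (A x) \<inter> C \<noteq> {}} \<union> (if 0 \<in> C then - D else {})"
      using maximizers_neg_norm[OF A_convex compact_imp_closed[OF A_compact] A_nonempty]
      by (auto simp: \<sigma>_def split: if_splits)
    moreover have "{x\<in>D. maximizers (\<lambda>y. - norm y) (A x) \<inter> C \<noteq> {}} \<in> sets borel"
    proof (rule borel_hits_maximizers[OF D])
      show "continuous_on UNIV (\<lambda>y::'b. - norm y)" by (intro continuous_intros)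
    qed (use A_compact A_nonempty hits_A that in auto)
    ultimately show ?thesis using D by auto
  qed
  then have "\<sigma> \<in> borel_measurable borel" by (rule borel_measurableI_closed_vimage)
  moreover have "\<sigma> x \<in> maximizers (inner u) {y. (x, y) \<in> G}" if "x \<in> fst ` G" for x
    using closest_point_in_set[OF compact_imp_closed[OF A_compact] A_nonempty, of x 0] that
    unfolding \<sigma>_def A_def T_def D_def by simp
  ultimately show ?thesis using that by blast
qed

lemma proj_eqI:
  fixes V :: "'a::euclidean_space set"
  assumes "subspace V" "v \<in> V" "z - v \<in> orthogonal_comp V"
  shows "proj V z = v"
  unfolding proj_def
proof (rule the_equality)
  fix v' assume v': "v' \<in> V \<and> z - v' \<in> orthogonal_comp V"
  have "v - v' \<in> V" using assms v' by (simp add: subspace_diff)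
  moreover have "(z - v') - (z - v) \<in> orthogonal_comp V"
    by (rule subspace_diff[OF subspace_orthogonal_comp]) (use assms v' in auto)
  ultimately have "v - v' \<in> V \<inter> orthogonal_comp V" by simp
  then show "v' = v" using orthogonal_Int_0[OF assms(1)] by auto
qed (use assms in blast)

lemma
  fixes V :: "'a::euclidean_space set"
  assumes "subspace V"
  shows proj_in: "proj V z \<in> V"
    and proj_orthogonal: "z - proj V z \<in> orthogonal_comp V"
proof -
  obtain y w where y: "y \<in> span V" "\<And>w'. w' \<in> span V \<Longrightarrow> orthogonal w w'" "z = y + w"
    using orthogonal_subspace_decomp_exists[of V z] by blast
  have span_V: "span V = V" using assms by (metis span_eq_iff)
  have "y \<in> V" using y(1) unfolding span_V .
  moreover have "z - y \<in> orthogonal_comp V"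
    using y(2,3) orthogonal_commute unfolding span_V orthogonal_comp_def by auto
  moreover from calculation have "proj V z = y" by (rule proj_eqI[OF assms])
  ultimately show "proj V z \<in> V" "z - proj V z \<in> orthogonal_comp V" by simp_all
qed

lemma norm_le_add_orthogonal:
  fixes x y :: "'a::real_inner"
  assumes "orthogonal x y"
  shows "norm x \<le> norm (x + y)"
proof (rule power2_le_imp_le)
  show "(norm x)\<^sup>2 \<le> (norm (x + y))\<^sup>2" using norm_add_Pythagorean[OF assms] by simp
qed simp

definition fiber_graph :: "'a::euclidean_space set \<Rightarrow> 'a set \<Rightarrow> ('a \<times> 'a) set" where
  "fiber_graph K V = {(x, y). x \<in> V \<and> y \<in> fiber K V x}"

lemma fiber_graph_orthogonal:
  "(x, y) \<in> fiber_graph K V \<Longrightarrow> orthogonal x y"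
  unfolding fiber_graph_def fiber_def orthogonal_comp_def by blast

lemma fst_fiber_graph:
  assumes "subspace V"
  shows "fst ` fiber_graph K V = proj V ` K"
proof (intro set_eqI iffI)
  fix x assume "x \<in> fst ` fiber_graph K V"
  then obtain y where "x \<in> V" "y \<in> orthogonal_comp V" "x + y \<in> K"
    unfolding fiber_graph_def fiber_def by auto
  moreover from this have "proj V (x + y) = x" by (intro proj_eqI[OF assms]) auto
  ultimately show "x \<in> proj V ` K" by force
next
  fix x assume "x \<in> proj V ` K"
  then obtain z where "z \<in> K" "x = proj V z" by blast
  then have "(x, z - x) \<in> fiber_graph K V"
    using proj_in[OF assms] proj_orthogonal[OF assms] unfolding fiber_graph_def fiber_def by auto
  then show "x \<in> fst ` fiber_graph K V" by force
qed

lemma compact_fiber_graph: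
  assumes "compact K" "subspace V"
  shows "compact (fiber_graph K V)"
  unfolding compact_eq_bounded_closed
proof
  obtain R where R: "\<And>z. z \<in> K \<Longrightarrow> norm z \<le> R"
    using compact_imp_bounded[OF assms(1)] unfolding bounded_iff by blast
  have pair_bound: "norm (x, y) \<le> R + R" if "(x, y) \<in> fiber_graph K V" for x y
  proof -
    have "orthogonal x y" "x + y \<in> K"
      using that fiber_graph_orthogonal unfolding fiber_graph_def fiber_def by auto
    then have "norm x \<le> R" "norm y \<le> R"
      using R norm_le_add_orthogonal[of x y] norm_le_add_orthogonal[of y x]
      by (auto simp: orthogonal_commute add.commute intro: order_trans)
    then show ?thesis using norm_Pair_le[of x y] by simp
  qed
  show "bounded (fiber_graph K V)"
    unfolding bounded_iff using pair_bound by (metis prod.collapse)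
  have "fiber_graph K V = (V \<times> orthogonal_comp V) \<inter> (\<lambda>p. fst p + snd p) -` K"
    unfolding fiber_graph_def fiber_def by auto
  moreover have "closed ((\<lambda>p. fst p + snd p) -` K)"
    using assms(1) by (intro continuous_closed_vimage compact_imp_closed continuous_intros)
  moreover have "closed (V \<times> orthogonal_comp V)"
    using closed_subspace[OF assms(2)] closed_subspace[OF subspace_orthogonal_comp]
    by (rule closed_Times)
  ultimately show "closed (fiber_graph K V)" by (simp add: closed_Int)
qed

lemma compact_proj_image:
  assumes "compact K" "subspace V"
  shows "compact (proj V ` K)"
  unfolding fst_fiber_graph[OF assms(2), symmetric]
  using compact_fiber_graph[OF assms] by (intro compact_continuous_image continuous_intros)

lemma fiber_eq_translate: "fiber K V x = orthogonal_comp V \<inter> (\<lambda>z. z - x) ` K"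
proof -
  have "x + y \<in> K \<longleftrightarrow> y \<in> (\<lambda>z. z - x) ` K" for y
    by (metis (no_types, lifting) add_diff_cancel_left' diff_add_cancel image_iff)
  then show ?thesis unfolding fiber_def by blast
qed

lemma convex_fiber:
  assumes "convex K"
  shows "convex (fiber K V x)"
  unfolding fiber_eq_translate using assms
  by (intro convex_Int subspace_imp_convex[OF subspace_orthogonal_comp] convex_translation_subtract)

lemma compact_fiber:
  assumes "compact K"
  shows "compact (fiber K V x)"
  unfolding fiber_eq_translate using assms
  by (intro closed_Int_compact closed_subspace subspace_orthogonal_comp compact_continuous_image
      continuous_intros)

lemma fiber_nonempty:
  assumes "subspace V" "x \<in> proj V ` K"
  shows "fiber K V x \<noteq> {}"
proof -
  obtain z where "z \<in> K" "x = proj V z" using assms(2) by blast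
  then have "z - x \<in> fiber K V x" using proj_orthogonal[OF assms(1)] unfolding fiber_def by simp
  then show ?thesis by blast
qed

lemma face_fiber_eq_maximizers:
  assumes "compact K" "subspace V" "x \<in> proj V ` K"
  shows "face (fiber K V x) u = maximizers (inner u) (fiber K V x)"
  using compact_fiber[OF assms(1)] fiber_nonempty[OF assms(2,3)]
  by (intro face_eq_maximizers maximizers_nonempty continuous_intros)

lemma exists_maximizing_section:
  assumes "convex K" "compact K" "subspace V"
  obtains \<sigma> where "meas_section K V \<sigma>"
    "\<And>x. x \<in> proj V ` K \<Longrightarrow> \<sigma> x \<in> maximizers (inner u) (fiber K V x)"
proof -
  have slice: "{y. (x, y) \<in> fiber_graph K V} = (if x \<in> V then fiber K V x else {})" for x
    unfolding fiber_graph_def by auto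
  have "convex {y. (x, y) \<in> fiber_graph K V}" for x
    unfolding slice using convex_fiber[OF assms(1)] by simp
  then obtain \<sigma> where \<sigma>: "\<sigma> \<in> borel_measurable borel"
    "\<And>x. x \<in> fst ` fiber_graph K V \<Longrightarrow> \<sigma> x \<in> maximizers (inner u) {y. (x, y) \<in> fiber_graph K V}"
    using measurable_argmax_selection[OF compact_fiber_graph[OF assms(2,3)]] by blast
  have max: "\<sigma> x \<in> maximizers (inner u) (fiber K V x)" if "x \<in> proj V ` K" for x
  proof -
    have "x \<in> V" using that proj_in[OF assms(3)] by blast
    then show ?thesis using \<sigma>(2)[of x] that unfolding fst_fiber_graph[OF assms(3)] slice by simp
  qed
  then have "meas_section K V \<sigma>"
    unfolding meas_section_def maximizers_def using measurable_restrict_space1[OF \<sigma>(1)] by blast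
  with max show ?thesis using that by blast
qed

lemma AE_set_integral_nonneg_eq_0:
  fixes f :: "'a \<Rightarrow> real"
  assumes "set_integrable M A f" "\<And>x. x \<in> A \<Longrightarrow> 0 \<le> f x" "(LINT x:A|M. f x) = 0"
  shows "AE x\<in>A in M. f x = 0"
proof -
  have "AE x in M. indicator A x *\<^sub>R f x = 0"
    using assms unfolding set_integrable_def set_lebesgue_integral_def
    by (subst integral_nonneg_eq_0_iff_AE[symmetric]) (auto simp: indicator_def)
  then show ?thesis by (rule AE_mp) (auto simp: indicator_def)
qed

lemma sets_lebesgue_sub [simp]: "sets (lebesgue_sub L) = sets borel"
  by (simp add: lebesgue_sub_def)

context
  fixes K :: "'a::euclidean_space set" and L :: "'v::euclidean_space \<Rightarrow> 'a"
  assumes compact_K: "compact K" and linear_L: "linear L" and norm_L: "\<And>t. norm (L t) = norm t"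
begin

private lemma subspace_range_L: "subspace (range L)"
  using linear_L by (rule linear_subspace_image[OF _ subspace_UNIV])

lemma emeasure_proj_image_finite: "emeasure (lebesgue_sub L) (proj (range L) ` K) < \<infinity>"
proof -
  have D: "compact (proj (range L) ` K)"
    using compact_K subspace_range_L by (rule compact_proj_image)
  then obtain B where B: "\<And>x. x \<in> proj (range L) ` K \<Longrightarrow> norm x \<le> B"
    unfolding compact_eq_bounded_closed bounded_iff by blast
  have "continuous_on UNIV L"
    using linear_L by (simp add: linear_continuous_on linear_conv_bounded_linear)
  then have "L \<in> borel_measurable lborel" by (simp add: borel_measurable_continuous_onI)
  then have "emeasure (lebesgue_sub L) (proj (range L) ` K) =
      emeasure lborel (L -` proj (range L) ` K \<inter> space lborel)"
    unfolding lebesgue_sub_def using D by (intro emeasure_distr) (auto simp: compact_imp_closed)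
  moreover have "bounded (L -` proj (range L) ` K \<inter> space lborel)"
    unfolding bounded_iff using B norm_L by (metis IntD1 vimageE)
  ultimately show ?thesis by (metis emeasure_bounded_finite)
qed

lemma set_borel_measurable_section:
  assumes "meas_section K (range L) \<gamma>"
  shows "set_borel_measurable (lebesgue_sub L) (proj (range L) ` K) \<gamma>"
proof -
  have "proj (range L) ` K \<in> sets borel"
    using compact_proj_image[OF compact_K subspace_range_L] by (simp add: compact_imp_closed)
  then show ?thesis
    using assms unfolding meas_section_def set_borel_measurable_def
    by (simp add: borel_measurable_restrict_space_iff[symmetric] measurable_cong_sets[OF sets_lebesgue_sub refl])
qed

lemma set_integrable_section:
  assumes "meas_section K (range L) \<gamma>"
  shows "set_integrable (lebesgue_sub L) (proj (range L) ` K) \<gamma>"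
proof -
  obtain R where R: "\<And>z. z \<in> K \<Longrightarrow> norm z \<le> R"
    using compact_imp_bounded[OF compact_K] unfolding bounded_iff by blast
  have "norm (\<gamma> x) \<le> R" if "x \<in> proj (range L) ` K" for x
  proof -
    have "x \<in> range L" using that proj_in[OF subspace_range_L] by blast
    with assms that have "(x, \<gamma> x) \<in> fiber_graph K (range L)"
      unfolding meas_section_def fiber_graph_def by blast
    then have "orthogonal (\<gamma> x) x" "\<gamma> x + x \<in> K"
      using fiber_graph_orthogonal orthogonal_commute unfolding fiber_graph_def fiber_def
      by (blast, simp add: add.commute)
    then show ?thesis using norm_le_add_orthogonal R by (blast intro: order_trans)
  qed
  then show ?thesis
    unfolding set_integrable_def
    using set_borel_measurable_section[OF assms] emeasure_proj_image_finite
      compact_proj_image[OF compact_K subspace_range_L]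
    by (intro integrableI_bounded_set[where A = "proj (range L) ` K" and B = R])
      (auto simp: set_borel_measurable_def compact_imp_closed)
qed

lemma inner_sec_integral:
  assumes "meas_section K (range L) \<gamma>"
  shows "u \<bullet> sec_integral L K \<gamma> = (LINT x:proj (range L) ` K|lebesgue_sub L. u \<bullet> \<gamma> x)"
  using integral_inner_right[of u "lebesgue_sub L" "\<lambda>x. indicator (proj (range L) ` K) x *\<^sub>R \<gamma> x"]
    set_integrable_section[OF assms]
  unfolding sec_integral_def set_integrable_def set_lebesgue_integral_def by simp

lemma set_integrable_inner_section:
  assumes "meas_section K (range L) \<gamma>"
  shows "set_integrable (lebesgue_sub L) (proj (range L) ` K) (\<lambda>x. u \<bullet> \<gamma> x)"
proof -
  have "integrable (lebesgue_sub L) (\<lambda>x. u \<bullet> (indicator (proj (range L) ` K) x *\<^sub>R \<gamma> x))"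
    using set_integrable_section[OF assms] unfolding set_integrable_def by (rule integrable_inner_right)
  then show ?thesis unfolding set_integrable_def by simp
qed

lemma inner_sec_integral_le:
  assumes \<gamma>: "meas_section K (range L) \<gamma>" and \<sigma>: "meas_section K (range L) \<sigma>"
    and \<sigma>_max: "\<And>x. x \<in> proj (range L) ` K \<Longrightarrow> \<sigma> x \<in> maximizers (inner u) (fiber K (range L) x)"
  shows "u \<bullet> sec_integral L K \<gamma> \<le> u \<bullet> sec_integral L K \<sigma>"
  unfolding inner_sec_integral[OF \<gamma>] inner_sec_integral[OF \<sigma>]
  using \<gamma> \<sigma>_max
  by (intro set_integral_mono set_integrable_inner_section \<gamma> \<sigma>)
    (auto simp: meas_section_def maximizers_def)

lemma sec_integral_in_maximizers:
  assumes "meas_section K (range L) \<sigma>"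
    and "\<And>x. x \<in> proj (range L) ` K \<Longrightarrow> \<sigma> x \<in> maximizers (inner u) (fiber K (range L) x)"
  shows "sec_integral L K \<sigma> \<in> maximizers (inner u) (fiber_body L K)"
  using assms inner_sec_integral_le unfolding maximizers_def fiber_body_def by blast

lemma maximizing_section_of_maximizer:
  assumes y: "y \<in> maximizers (inner u) (fiber_body L K)"
    and \<sigma>: "meas_section K (range L) \<sigma>"
    and \<sigma>_max: "\<And>x. x \<in> proj (range L) ` K \<Longrightarrow> \<sigma> x \<in> maximizers (inner u) (fiber K (range L) x)"
  obtains \<gamma> where "meas_section K (range L) \<gamma>" "sec_integral L K \<gamma> = y"
    "\<And>x. x \<in> proj (range L) ` K \<Longrightarrow> \<gamma> x \<in> maximizers (inner u) (fiber K (range L) x)"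
proof -
  define D where "D = proj (range L) ` K"
  define M where "M = lebesgue_sub L"
  obtain \<gamma> where \<gamma>: "meas_section K (range L) \<gamma>" "y = sec_integral L K \<gamma>"
    using y unfolding maximizers_def fiber_body_def by blast
  have "u \<bullet> sec_integral L K \<sigma> \<le> u \<bullet> sec_integral L K \<gamma>"
    using y sec_integral_in_maximizers[OF \<sigma> \<sigma>_max] \<gamma>(2) unfolding maximizers_def by blast
  then have "u \<bullet> sec_integral L K \<gamma> = u \<bullet> sec_integral L K \<sigma>"
    using inner_sec_integral_le[OF \<gamma>(1) \<sigma> \<sigma>_max] by linarith
  then have "(LINT x:D|M. u \<bullet> \<sigma> x - u \<bullet> \<gamma> x) = 0"
    unfolding D_def M_def inner_sec_integral[OF \<gamma>(1)] inner_sec_integral[OF \<sigma>]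
    by (simp add: set_integrable_inner_section \<gamma>(1) \<sigma>)
  moreover have "u \<bullet> \<gamma> x \<le> u \<bullet> \<sigma> x" if "x \<in> D" for x
    using \<gamma>(1) \<sigma>_max that unfolding D_def meas_section_def maximizers_def by blast
  ultimately have ae: "AE x\<in>D in M. u \<bullet> \<sigma> x - u \<bullet> \<gamma> x = 0"
    unfolding D_def M_def
    by (intro AE_set_integral_nonneg_eq_0 set_integral_diff set_integrable_inner_section \<gamma>(1) \<sigma>) auto
  define \<gamma>' where "\<gamma>' x = (if u \<bullet> \<gamma> x = u \<bullet> \<sigma> x then \<gamma> x else \<sigma> x)" for x
  have \<gamma>'_max: "\<gamma>' x \<in> maximizers (inner u) (fiber K (range L) x)" if "x \<in> D" for x
    using \<gamma>(1) \<sigma>_max that unfolding \<gamma>'_def D_def meas_section_def maximizers_def by auto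
  have "\<gamma> \<in> borel_measurable (restrict_space borel D)" "\<sigma> \<in> borel_measurable (restrict_space borel D)"
    using \<gamma>(1) \<sigma> unfolding meas_section_def D_def by blast+
  then have "\<gamma>' \<in> borel_measurable (restrict_space borel D)"
    unfolding \<gamma>'_def by measurable
  with \<gamma>'_max have \<gamma>': "meas_section K (range L) \<gamma>'"
    unfolding meas_section_def D_def maximizers_def by blast
  have "sec_integral L K \<gamma>' = sec_integral L K \<gamma>"
    unfolding sec_integral_def set_lebesgue_integral_def D_def[symmetric]
  proof (rule integral_cong_AE)
    show "AE x in lebesgue_sub L. indicator D x *\<^sub>R \<gamma>' x = indicator D x *\<^sub>R \<gamma> x"
      using ae unfolding M_def by (rule AE_mp) (auto simp: \<gamma>'_def indicator_def)
  qed (use set_borel_measurable_section[OF \<gamma>'] set_borel_measurable_section[OF \<gamma>(1)] in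
      \<open>simp_all add: set_borel_measurable_def D_def\<close>)
  with \<gamma>' \<gamma>'_max \<gamma>(2) show ?thesis using that unfolding D_def by blast
qed

lemma face_fiber_body_eq_maximizers:
  assumes "convex K"
  shows "face (fiber_body L K) u = maximizers (inner u) (fiber_body L K)"
proof -
  obtain \<sigma> where "meas_section K (range L) \<sigma>"
    "\<And>x. x \<in> proj (range L) ` K \<Longrightarrow> \<sigma> x \<in> maximizers (inner u) (fiber K (range L) x)"
    using exists_maximizing_section[OF assms compact_K subspace_range_L]
    by blast
  then have "sec_integral L K \<sigma> \<in> maximizers (inner u) (fiber_body L K)"
    by (rule sec_integral_in_maximizers)
  then show ?thesis by (intro face_eq_maximizers) blast
qed

lemma face_fiber_body_realized:
  assumes "convex K" "y \<in> face (fiber_body L K) u"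
  obtains \<gamma> where "meas_section K (range L) \<gamma>" "sec_integral L K \<gamma> = y"
    "\<And>x. x \<in> proj (range L) ` K \<Longrightarrow> \<gamma> x \<in> face (fiber K (range L) x) u"
proof -
  obtain \<sigma> where \<sigma>: "meas_section K (range L) \<sigma>"
    "\<And>x. x \<in> proj (range L) ` K \<Longrightarrow> \<sigma> x \<in> maximizers (inner u) (fiber K (range L) x)"
    using exists_maximizing_section[OF assms(1) compact_K subspace_range_L] by blast
  have "y \<in> maximizers (inner u) (fiber_body L K)"
    using assms face_fiber_body_eq_maximizers by blast
  then obtain \<gamma> where "meas_section K (range L) \<gamma>" "sec_integral L K \<gamma> = y"
    "\<And>x. x \<in> proj (range L) ` K \<Longrightarrow> \<gamma> x \<in> maximizers (inner u) (fiber K (range L) x)"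
    using maximizing_section_of_maximizer[OF _ \<sigma>] by blast
  then show ?thesis
    using that face_fiber_eq_maximizers[OF compact_K subspace_range_L] by simp
qed

lemma face_fiber_body_eq:
  assumes "convex K"
  shows "face (fiber_body L K) u = {sec_integral L K \<gamma> | \<gamma>. meas_section K (range L) \<gamma> \<and>
    (\<forall>x \<in> proj (range L) ` K. \<gamma> x \<in> face (fiber K (range L) x) u)}"
proof -
  have "sec_integral L K \<gamma> \<in> face (fiber_body L K) u"
    if "meas_section K (range L) \<gamma>" "\<forall>x \<in> proj (range L) ` K. \<gamma> x \<in> face (fiber K (range L) x) u"
    for \<gamma>
    using that face_fiber_eq_maximizers[OF compact_K subspace_range_L]
    unfolding face_fiber_body_eq_maximizers[OF assms] by (intro sec_integral_in_maximizers) auto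
  with face_fiber_body_realized[OF assms] show ?thesis by blast
qed

end

theorem mainTheorem6:
  fixes K :: "'a::euclidean_space set"
    and L :: "'v::euclidean_space \<Rightarrow> 'a"
  assumes "convex K" and "compact K" and "K \<noteq> {}"
    and "linear L" and "\<And>t. norm (L t) = norm t"
  shows "\<forall>u \<in> orthogonal_comp (range L).
           (\<forall>y \<in> face (fiber_body L K) u. \<exists>\<gamma>.
              meas_section K (range L) \<gamma> \<and> sec_integral L K \<gamma> = y \<and>
              (\<forall>x \<in> proj (range L) ` K. \<gamma> x \<in> face (fiber K (range L) x) u))
         \<and> face (fiber_body L K) u =
             {sec_integral L K \<gamma> | \<gamma>. meas_section K (range L) \<gamma> \<and>
                (\<forall>x \<in> proj (range L) ` K. \<gamma> x \<in> face (fiber K (range L) x) u)}"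
  using face_fiber_body_realized[OF assms(2,4,5,1)] face_fiber_body_eq[OF assms(2,4,5,1)] by blast

end
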